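(* Let $d\rho_0$ be a probability measure on $\mathbb{R}$ with compact support, $c_1,\dots,c_k\in\mathbb{R}$, $\tfrac12 f'(x)=\sum_{j=1}^kc_jx^j$, and $d\rho_t=e^{\frac12 f'(x)t}d\rho_0/\int e^{\frac12 f'(x)t}d\rho_0$. Let $n\ge0$ be such that the support of $d\rho_0$ has at least $n+1$ points, let $P_n(x;t)$ be the $n$-th monic orthogonal polynomial of $d\rho_t$, $\|P_n\|$ its norm in $L^2(d\rho_t)$, and $J=J(t)$ the Jacobi matrix of $d\rho_t$. Then \[ \frac{d}{dt}\log\|P_n\|=\tfrac12\sum_{j=1}^kc_j\bigl[(J^j)_{n+1,\,n+1}-(J^j)_{1,1}\bigr]. \]
   Context: The Jacobi matrix $J$ (indices starting at $1$) has entries $J_{jk}=\langle p_{j-1},xp_{k-1}\rangle_{L^2(d\rho_t)}$ where $p_j=P_j/\|P_j\|$ are the orthonormal polynomials; it is tridiagonal with diagonal $b_1,b_2,\dots$ and off-diagonal $a_1,a_2,\dots>0$. *)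

theory Defs
  imports "HOL-Probability.Probability" "HOL-Computational_Algebra.Polynomial"
begin

definition msupp :: "real measure \<Rightarrow> real set" where
  "msupp M = {x. \<forall>e>0. emeasure M (ball x e) > 0}"

definition at_least_points :: "nat \<Rightarrow> 'a set \<Rightarrow> bool" where
  "at_least_points m S \<longleftrightarrow> (\<exists>A. A \<subseteq> S \<and> finite A \<and> card A = m)"

definition half_fprime :: "(nat \<Rightarrow> real) \<Rightarrow> nat \<Rightarrow> real \<Rightarrow> real" where
  "half_fprime c k x = (\<Sum>j=1..k. c j * x ^ j)"

definition rho_t :: "real measure \<Rightarrow> (nat \<Rightarrow> real) \<Rightarrow> nat \<Rightarrow> real \<Rightarrow> real measure" where
  "rho_t rho0 c k t =
     density rho0 (\<lambda>x. ennreal (exp (half_fprime c k x * t) /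
        (\<integral>y. exp (half_fprime c k y * t) \<partial>rho0)))"

definition poly_inner :: "real measure \<Rightarrow> real poly \<Rightarrow> real poly \<Rightarrow> real" where
  "poly_inner M p q = (\<integral>x. poly p x * poly q x \<partial>M)"

definition poly_L2norm :: "real measure \<Rightarrow> real poly \<Rightarrow> real" where
  "poly_L2norm M p = sqrt (poly_inner M p p)"

definition is_monic_orth_poly :: "real measure \<Rightarrow> nat \<Rightarrow> real poly \<Rightarrow> bool" where
  "is_monic_orth_poly M n P \<longleftrightarrow>
     degree P = n \<and> lead_coeff P = 1 \<and>
     (\<forall>q. degree q < n \<longrightarrow> poly_inner M P q = 0)"

(* the n-th monic orthogonal polynomial (unique when supp M has >= n+1 points) *)
definition monic_orth_poly :: "real measure \<Rightarrow> nat \<Rightarrow> real poly" where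
  "monic_orth_poly M n = (THE P. is_monic_orth_poly M n P)"

definition orthonormal_poly :: "real measure \<Rightarrow> nat \<Rightarrow> real poly" where
  "orthonormal_poly M n =
     smult (1 / poly_L2norm M (monic_orth_poly M n)) (monic_orth_poly M n)"

(* Jacobi matrix, indices starting at 1: J_{ij} = <p_{i-1}, x p_{j-1}>.
   The entry is defined (nonzero possibly) only for indices for which p_{i-1},
   p_{j-1} exist, i.e. the support has at least i resp. j points (if the support
   is finite with N points, J is the N x N Jacobi matrix, extended by zeros). *)
definition jacobi_matrix :: "real measure \<Rightarrow> nat \<Rightarrow> nat \<Rightarrow> real" where
  "jacobi_matrix M i j =
     (if 1 \<le> i \<and> 1 \<le> j \<and> at_least_points i (msupp M) \<and> at_least_points j (msupp M)
      then poly_inner M (orthonormal_poly M (i - 1)) ([:0, 1:] * orthonormal_poly M (j - 1))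
      else 0)"

definition mat_mult_inf :: "(nat \<Rightarrow> nat \<Rightarrow> real) \<Rightarrow> (nat \<Rightarrow> nat \<Rightarrow> real) \<Rightarrow> nat \<Rightarrow> nat \<Rightarrow> real" where
  "mat_mult_inf A B i j = (\<Sum>l. A i l * B l j)"

fun mat_pow_inf :: "(nat \<Rightarrow> nat \<Rightarrow> real) \<Rightarrow> nat \<Rightarrow> nat \<Rightarrow> nat \<Rightarrow> real" where
  "mat_pow_inf A 0 = (\<lambda>i j. if i = j then 1 else 0)"
| "mat_pow_inf A (Suc m) = mat_mult_inf (mat_pow_inf A m) A"

end

theory Submission
  imports Defs
begin

text \<open>Write \<open>T\<^sub>s\<close> for the measure \<open>e\<^sup>s\<^sup>g d\<rho>\<^sub>0\<close> with \<open>g = f'/2\<close>, and \<open>N\<^sub>m(s)\<close> for the squared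
  \<open>L\<^sup>2(T\<^sub>s)\<close>-norm of the monic orthogonal polynomial \<open>P\<^sub>m(s)\<close> of \<open>T\<^sub>s\<close>. Since \<open>\<rho>\<^sub>t\<close> is \<open>T\<^sub>t\<close>
  normalised, \<open>\<parallel>P\<^sub>n\<parallel>\<^sup>2 = N\<^sub>n(t) / N\<^sub>0(t)\<close>, so it suffices to show
  \<open>N\<^sub>m'(u) = \<integral> g P\<^sub>m(u)\<^sup>2 dT\<^sub>u\<close>. This is an envelope argument: \<open>N\<^sub>m(s)\<close> is the minimum of
  \<open>\<integral> Q\<^sup>2 dT\<^sub>s\<close> over monic \<open>Q\<close> of degree \<open>m\<close>, and since \<open>P\<^sub>m(s) - P\<^sub>m(u)\<close> is \<open>T\<^sub>u\<close>-orthogonal to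
  \<open>P\<^sub>m(u)\<close>, Cauchy--Schwarz gives \<open>N\<^sub>m(s) = \<integral> P\<^sub>m(u)\<^sup>2 dT\<^sub>s + O((s - u)\<^sup>2)\<close>; no
  differentiability of \<open>P\<^sub>m\<close> in \<open>s\<close> is needed. Finally \<open>\<integral> x\<^sup>j P\<^sub>m\<^sup>2 dT / \<integral> P\<^sub>m\<^sup>2 dT\<close> is the
  diagonal entry \<open>(J\<^sup>j)\<^sub>m\<^sub>+\<^sub>1\<^sub>,\<^sub>m\<^sub>+\<^sub>1\<close>, by Parseval's identity in the orthonormal basis.\<close>

lemma at_least_points_iff:
  "at_least_points m S \<longleftrightarrow> infinite S \<or> m \<le> card S"
proof
  assume "at_least_points m S"
  then obtain A where "A \<subseteq> S" "finite A" "card A = m"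
    unfolding at_least_points_def by blast
  then show "infinite S \<or> m \<le> card S"
    using card_mono by blast
next
  assume "infinite S \<or> m \<le> card S"
  then obtain A where "A \<subseteq> S" "finite A" "card A = m"
    by (meson infinite_arbitrarily_large obtain_subset_with_card_n card.infinite le_zero_eq)
  then show "at_least_points m S"
    unfolding at_least_points_def by blast
qed

lemma at_least_points_mono:
  "at_least_points m S \<Longrightarrow> m' \<le> m \<Longrightarrow> at_least_points m' S"
  unfolding at_least_points_iff by auto

lemma degree_basis_span:
  fixes P :: "nat \<Rightarrow> 'a::field poly"
  assumes "\<And>r. r \<le> d \<Longrightarrow> degree (P r) = r \<and> P r \<noteq> 0" and "degree q \<le> d"
  shows "\<exists>a. q = (\<Sum>r\<le>d. smult (a r) (P r))"
  using assms
proof (induction d arbitrary: q)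
  case 0
  have "degree (P 0) = 0" "P 0 \<noteq> 0"
    using "0.prems"(1)[of 0] by auto
  then have "degree (P 0) = 0" "coeff (P 0) 0 \<noteq> 0"
    using leading_coeff_0_iff[of "P 0"] by simp_all
  then have "coeff q i = coeff (smult (coeff q 0 / coeff (P 0) 0) (P 0)) i" for i
    using "0.prems"(2) by (cases i) (auto simp: coeff_eq_0)
  then have "q = smult (coeff q 0 / coeff (P 0) 0) (P 0)"
    by (rule poly_eqI)
  then show ?case by auto
next
  case (Suc d)
  define c where "c = coeff q (Suc d) / lead_coeff (P (Suc d))"
  have P: "degree (P (Suc d)) = Suc d" "lead_coeff (P (Suc d)) \<noteq> 0"
    using Suc.prems(1)[of "Suc d"] by (metis le_refl leading_coeff_0_iff)+
  have "degree (q - smult c (P (Suc d))) \<le> d"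
  proof (rule degree_le, intro allI impI)
    fix i assume "d < i"
    then consider "i = Suc d" | "Suc d < i" by linarith
    then show "coeff (q - smult c (P (Suc d))) i = 0"
      by cases (use P Suc.prems(2) in \<open>auto simp: c_def coeff_eq_0\<close>)
  qed
  then obtain a where a: "q - smult c (P (Suc d)) = (\<Sum>r\<le>d. smult (a r) (P r))"
    using Suc.IH Suc.prems(1) by force
  have "q = (\<Sum>r\<le>d. smult ((a(Suc d := c)) r) (P r)) + smult ((a(Suc d := c)) (Suc d)) (P (Suc d))"
    using a by (simp add: algebra_simps)
  then show ?case
    unfolding sum.atMost_Suc by blast
qed

lemma degree_diff_less_if_lead_coeff_eq:
  fixes p q :: "'a::field poly"
  assumes "degree p = m" "degree q = m" "lead_coeff p = lead_coeff q" "p \<noteq> q"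
  shows "degree (p - q) < m"
proof -
  have "degree (p - q) \<le> m"
    using degree_diff_le[of p m q] assms(1,2) by simp
  moreover have "lead_coeff (p - q) \<noteq> 0"
    by (metis assms(4) eq_iff_diff_eq_0 leading_coeff_0_iff)
  moreover have "coeff (p - q) m = 0"
    using assms(1-3) by simp
  ultimately show ?thesis
    by (metis le_neq_implies_less)
qed

lemma monic_orth_poly_scaled:
  assumes "\<And>p q. poly_inner M' p q = a * poly_inner M p q" and "a \<noteq> 0"
  shows "monic_orth_poly M' n = monic_orth_poly M n"
  using assms unfolding monic_orth_poly_def is_monic_orth_poly_def by simp

section \<open>Finite Borel measures with compact support\<close>

locale compact_support_measure = finite_measure M for M :: "real measure" +
  assumes sets_eq_borel: "sets M = sets borel"
    and compact_msupp: "compact (msupp M)"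
begin

lemma space_eq_UNIV: "space M = UNIV"
  using sets_eq_imp_space_eq[OF sets_eq_borel] by simp

lemma borel_measurable_continuous:
  "continuous_on UNIV f \<Longrightarrow> (f :: real \<Rightarrow> real) \<in> borel_measurable M"
  using measurable_cong_sets[OF sets_eq_borel refl] borel_measurable_continuous_onI by blast

lemma AE_in_msupp: "AE x in M. x \<in> msupp M"
proof -
  define F where "F = {ball x e |x e. e > 0 \<and> emeasure M (ball x e) = 0}"
  obtain F' where F': "F' \<subseteq> F" "countable F'" "\<Union>F' = \<Union>F"
    using Lindelof[of F] unfolding F_def by auto
  have "- msupp M \<subseteq> \<Union>F"
  proof
    fix x assume "x \<in> - msupp M"
    then obtain e where "e > 0" "emeasure M (ball x e) = 0"
      unfolding msupp_def by (auto simp: not_less)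
    then show "x \<in> \<Union>F"
      unfolding F_def using centre_in_ball by blast
  qed
  moreover have "\<Union>(id ` F') \<in> null_sets M"
  proof (rule null_sets_UN')
    fix S assume "S \<in> F'"
    then obtain x e where "S = ball x e" "emeasure M (ball x e) = 0"
      using F'(1) unfolding F_def by blast
    then show "id S \<in> null_sets M"
      using sets_eq_borel by (simp add: null_setsI)
  qed (rule F'(2))
  ultimately show ?thesis
    by (intro AE_I'[of "\<Union>F'"]) (use F'(3) in auto)
qed

lemma bounded_on_msupp:
  assumes "continuous_on UNIV g"
  obtains B where "\<And>x. x \<in> msupp M \<Longrightarrow> \<bar>g x :: real\<bar> \<le> B"
proof -
  have "bounded (g ` msupp M)"
    using assms compact_msupp
    by (intro compact_imp_bounded compact_continuous_image) (auto intro: continuous_on_subset)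
  then show ?thesis
    using that unfolding bounded_iff by auto
qed

lemma integrable_continuous:
  assumes "continuous_on UNIV (f :: real \<Rightarrow> real)"
  shows "integrable M f"
proof -
  obtain B where B: "\<And>x. x \<in> msupp M \<Longrightarrow> \<bar>f x\<bar> \<le> B"
    using bounded_on_msupp[OF assms] by blast
  have "AE x in M. norm (f x) \<le> B"
    using AE_in_msupp by eventually_elim (use B in auto)
  then show ?thesis
    using integrable_const_bound borel_measurable_continuous[OF assms] by blast
qed

lemma integral_mono_on_msupp:
  fixes f h :: "real \<Rightarrow> real"
  assumes "continuous_on UNIV f" "continuous_on UNIV h" "\<And>x. x \<in> msupp M \<Longrightarrow> f x \<le> h x"
  shows "integral\<^sup>L M f \<le> integral\<^sup>L M h"
  using integrable_continuous[OF assms(1)] integrable_continuous[OF assms(2)]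
  by (rule integral_mono_AE) (use AE_in_msupp assms(3) in auto)

lemma integral_density_continuous:
  assumes "continuous_on UNIV w" "\<And>x. 0 \<le> w x" "continuous_on UNIV f"
  shows "integral\<^sup>L (density M (\<lambda>x. ennreal (w x))) f = (\<integral>x. w x * f x \<partial>M)"
  using integral_density[OF borel_measurable_continuous[OF assms(3)]
      borel_measurable_continuous[OF assms(1)]] assms(2)
  by simp

lemma
  assumes "continuous_on UNIV w" "\<And>x. 0 < w x"
  shows compact_support_measure_density: "compact_support_measure (density M (\<lambda>x. ennreal (w x)))"
    and msupp_density: "msupp (density M (\<lambda>x. ennreal (w x))) = msupp M"
proof -
  let ?D = "density M (\<lambda>x. ennreal (w x))"
  have w: "(\<lambda>x. ennreal (w x)) \<in> borel_measurable M"
    using borel_measurable_continuous[OF assms(1)] by measurable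
  have "B \<in> null_sets ?D \<longleftrightarrow> B \<in> null_sets M" if "B \<in> sets M" for B
    using that assms(2) null_sets_density_iff[OF w, of B] AE_iff_null_sets[OF that]
    by (simp add: less_le)
  then show supp: "msupp ?D = msupp M"
    using sets_eq_borel unfolding msupp_def by (auto simp: null_sets_def zero_less_iff_neq_zero)
  have "emeasure ?D (space ?D) = ennreal (\<integral>x. w x \<partial>M)"
    using integrable_continuous[OF assms(1)] assms(2)
    by (simp add: emeasure_density nn_integral_eq_integral less_imp_le)
  then have "finite_measure ?D"
    by (intro finite_measureI) simp
  then show "compact_support_measure ?D"
    unfolding compact_support_measure_def compact_support_measure_axioms_def
    using sets_eq_borel compact_msupp supp by simp
qed

end

section \<open>The inner product of polynomials\<close>

lemma discriminant_le_of_quadratic_nonneg: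
  fixes a b c :: real
  assumes "\<And>t. 0 \<le> a - 2 * t * b + t\<^sup>2 * c" and "0 \<le> c"
  shows "b\<^sup>2 \<le> a * c"
proof (cases "c = 0")
  case True
  have "b = 0"
  proof (rule ccontr)
    assume "b \<noteq> 0"
    have "0 \<le> a - 2 * ((a + 1) / (2 * b)) * b + ((a + 1) / (2 * b))\<^sup>2 * c"
      by (rule assms(1))
    also have "\<dots> = -1"
      using True \<open>b \<noteq> 0\<close> by (simp add: field_simps)
    finally show False by simp
  qed
  then show ?thesis using True by simp
next
  case False
  then have "0 < c" using assms(2) by simp
  have "0 \<le> a - 2 * (b / c) * b + (b / c)\<^sup>2 * c"
    by (rule assms(1))
  also have "\<dots> = (a * c - b\<^sup>2) / c"
    using \<open>0 < c\<close> by (simp add: field_simps power2_eq_square)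
  finally show ?thesis
    using \<open>0 < c\<close> by (simp add: zero_le_divide_iff)
qed

context compact_support_measure
begin

abbreviation "points m \<equiv> at_least_points m (msupp M)"

lemma integrable_poly_mult: "integrable M (\<lambda>x. poly p x * poly q x)"
  by (rule integrable_continuous) (intro continuous_intros)

lemma poly_inner_commute: "poly_inner M p q = poly_inner M q p"
  unfolding poly_inner_def by (simp add: mult.commute)

lemma poly_inner_add_left: "poly_inner M (p + q) r = poly_inner M p r + poly_inner M q r"
  unfolding poly_inner_def using integrable_poly_mult[of p r] integrable_poly_mult[of q r]
  by (simp add: distrib_right)

lemma poly_inner_diff_left: "poly_inner M (p - q) r = poly_inner M p r - poly_inner M q r"
  unfolding poly_inner_def using integrable_poly_mult[of p r] integrable_poly_mult[of q r]
  by (simp add: left_diff_distrib)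

lemma poly_inner_smult_left: "poly_inner M (smult a p) q = a * poly_inner M p q"
  unfolding poly_inner_def by (simp add: mult.assoc)

lemma poly_inner_zero_left [simp]: "poly_inner M 0 q = 0"
  unfolding poly_inner_def by simp

lemma poly_inner_zero_right [simp]: "poly_inner M p 0 = 0"
  unfolding poly_inner_def by simp

lemma poly_inner_sum_left: "poly_inner M (\<Sum>i\<in>A. p i) q = (\<Sum>i\<in>A. poly_inner M (p i) q)"
  by (induction A rule: infinite_finite_induct) (simp_all add: poly_inner_add_left)

lemma poly_inner_add_right: "poly_inner M r (p + q) = poly_inner M r p + poly_inner M r q"
  unfolding poly_inner_commute[of r] by (rule poly_inner_add_left)

lemma poly_inner_diff_right: "poly_inner M r (p - q) = poly_inner M r p - poly_inner M r q"
  unfolding poly_inner_commute[of r] by (rule poly_inner_diff_left)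

lemma poly_inner_smult_right: "poly_inner M p (smult a q) = a * poly_inner M p q"
  unfolding poly_inner_commute[of p] by (rule poly_inner_smult_left)

lemma poly_inner_sum_right: "poly_inner M q (\<Sum>i\<in>A. p i) = (\<Sum>i\<in>A. poly_inner M q (p i))"
  unfolding poly_inner_commute[of q] by (rule poly_inner_sum_left)

lemma poly_inner_mult_left: "poly_inner M (h * p) q = poly_inner M p (h * q)"
  unfolding poly_inner_def by (simp add: ac_simps)

lemma poly_inner_self_nonneg: "0 \<le> poly_inner M p p"
  unfolding poly_inner_def by simp

lemma poly_inner_cong_AE:
  assumes "AE x in M. poly q x = poly q' x"
  shows "poly_inner M p q = poly_inner M p q'"
  unfolding poly_inner_def
proof (rule integral_cong_AE)
  show "(\<lambda>x. poly p x * poly q x) \<in> borel_measurable M"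
    "(\<lambda>x. poly p x * poly q' x) \<in> borel_measurable M"
    by (intro borel_measurable_continuous continuous_intros)+
  show "AE x in M. poly p x * poly q x = poly p x * poly q' x"
    using assms by eventually_elim simp
qed

text \<open>A nonzero polynomial of degree \<open>d\<close> cannot vanish at \<open>d + 1\<close> points of the support, and
  it stays away from zero on a ball around a support point where it does not vanish.\<close>

lemma poly_inner_self_pos:
  assumes "p \<noteq> 0" "points (degree p + 1)"
  shows "0 < poly_inner M p p"
proof -
  obtain A where A: "A \<subseteq> msupp M" "finite A" "card A = degree p + 1"
    using assms(2) unfolding at_least_points_def by blast
  have "\<not> A \<subseteq> {x. poly p x = 0}"
  proof
    assume "A \<subseteq> {x. poly p x = 0}"
    then have "card A \<le> card {x. poly p x = 0}"
      using poly_roots_finite[OF assms(1)] by (rule card_mono[rotated])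
    then show False
      using card_poly_roots_bound[OF assms(1)] A(3) by simp
  qed
  then obtain x where x: "x \<in> msupp M" "poly p x \<noteq> 0"
    using A(1) by blast
  have "continuous (at x) (poly p)"
    by (intro continuous_intros)
  then obtain e where e: "e > 0" "\<And>y. dist x y < e \<Longrightarrow> poly p y \<noteq> 0"
    using continuous_at_avoid[of x "poly p" 0] x(2) by blast
  have "emeasure M (ball x e) \<noteq> 0"
    using x(1) e(1) unfolding msupp_def by fastforce
  moreover have "poly_inner M p p = 0 \<Longrightarrow> emeasure M (ball x e) = 0"
  proof -
    assume "poly_inner M p p = 0"
    then have "AE y in M. poly p y * poly p y = 0"
      using integral_nonneg_eq_0_iff_AE[OF integrable_poly_mult[of p p]]
      unfolding poly_inner_def by simp
    then have "AE y in M. y \<notin> ball x e"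
      by eventually_elim (use e in auto)
    moreover have "ball x e \<in> sets M" "{y \<in> space M. \<not> y \<notin> ball x e} = ball x e"
      using sets_eq_borel space_eq_UNIV by auto
    ultimately show "emeasure M (ball x e) = 0"
      using AE_iff_measurable[of "ball x e" M "\<lambda>y. y \<notin> ball x e"] by blast
  qed
  ultimately show ?thesis
    using poly_inner_self_nonneg[of p] by fastforce
qed

lemma poly_inner_Cauchy_Schwarz: "(poly_inner M p q)\<^sup>2 \<le> poly_inner M p p * poly_inner M q q"
proof (rule discriminant_le_of_quadratic_nonneg)
  fix t
  have "0 \<le> poly_inner M (p - smult t q) (p - smult t q)"
    by (rule poly_inner_self_nonneg)
  also have "\<dots> = poly_inner M p p - 2 * t * poly_inner M p q + t\<^sup>2 * poly_inner M q q"
    by (simp add: poly_inner_diff_left poly_inner_diff_right poly_inner_smult_left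
        poly_inner_smult_right poly_inner_commute[of q p] power2_eq_square algebra_simps)
  finally show "0 \<le> poly_inner M p p - 2 * t * poly_inner M p q + t\<^sup>2 * poly_inner M q q" .
qed (rule poly_inner_self_nonneg)

section \<open>Monic orthogonal polynomials\<close>

lemma poly_inner_eq_0_if_orthogonal_to_basis:
  assumes "\<And>r. r < m \<Longrightarrow> degree (P r) = r \<and> P r \<noteq> 0"
    and "\<And>r. r < m \<Longrightarrow> poly_inner M Q (P r) = 0"
    and "degree q < m"
  shows "poly_inner M Q q = 0"
proof -
  obtain d where d: "m = Suc d"
    using assms(3) by (cases m) auto
  have "\<exists>a. q = (\<Sum>r\<le>d. smult (a r) (P r))"
    using assms(1,3) unfolding d by (intro degree_basis_span) auto
  then obtain a where "q = (\<Sum>r\<le>d. smult (a r) (P r))" ..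
  then show ?thesis
    using assms(2) unfolding d
    by (auto simp: poly_inner_sum_right poly_inner_smult_right intro!: sum.neutral)
qed

lemma is_monic_orth_poly_unique:
  assumes "points (m + 1)" "is_monic_orth_poly M m P" "is_monic_orth_poly M m Q"
  shows "P = Q"
proof (rule ccontr)
  assume "P \<noteq> Q"
  then have "degree (P - Q) < m"
    using assms(2,3) by (intro degree_diff_less_if_lead_coeff_eq) (auto simp: is_monic_orth_poly_def)
  then have "poly_inner M (P - Q) (P - Q) = 0"
    using assms(2,3) by (simp add: is_monic_orth_poly_def poly_inner_diff_left)
  moreover have "0 < poly_inner M (P - Q) (P - Q)"
    using \<open>P \<noteq> Q\<close> \<open>degree (P - Q) < m\<close>
    by (intro poly_inner_self_pos at_least_points_mono[OF assms(1)]) auto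
  ultimately show False by simp
qed

lemma is_monic_orth_poly_gram_schmidt:
  assumes "\<And>r. r < m \<Longrightarrow> degree (P r) = r \<and> P r \<noteq> 0"
    and "\<And>r s. r < m \<Longrightarrow> s < m \<Longrightarrow> s \<noteq> r \<Longrightarrow> poly_inner M (P s) (P r) = 0"
    and "\<And>r. r < m \<Longrightarrow> 0 < poly_inner M (P r) (P r)"
  shows "is_monic_orth_poly M m
    (monom 1 m - (\<Sum>r<m. smult (poly_inner M (monom 1 m) (P r) / poly_inner M (P r) (P r)) (P r)))"
proof -
  define R where
    "R = (\<Sum>r<m. smult (poly_inner M (monom 1 m) (P r) / poly_inner M (P r) (P r)) (P r))"
  have "R = 0 \<or> degree R < m"
    unfolding R_def using assms(1)
    by (cases "m = 0") (auto intro!: degree_sum_less le_less_trans[OF degree_smult_le])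
  then have "degree (monom 1 m - R) = m" "coeff (monom 1 m - R) m = 1"
    using degree_add_eq_left[of "- R" "monom 1 m"]
    unfolding diff_conv_add_uminus by (auto simp: degree_monom_eq coeff_eq_0)
  moreover have "poly_inner M (monom 1 m - R) (P r) = 0" if "r < m" for r
  proof -
    have "poly_inner M R (P r)
        = (\<Sum>s\<in>{r}. poly_inner M (monom 1 m) (P s) / poly_inner M (P s) (P s) * poly_inner M (P s) (P r))"
      unfolding R_def poly_inner_sum_left poly_inner_smult_left
      by (rule sum.mono_neutral_right) (use that assms(2) in auto)
    then show ?thesis
      using assms(3)[OF that] by (simp add: poly_inner_diff_left)
  qed
  ultimately show ?thesis
    unfolding is_monic_orth_poly_def R_def[symmetric]
    using poly_inner_eq_0_if_orthogonal_to_basis[OF assms(1)] by simp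
qed

lemma is_monic_orth_poly_monic_orth_poly:
  "points (m + 1) \<Longrightarrow> is_monic_orth_poly M m (monic_orth_poly M m)"
proof (induction m rule: less_induct)
  case (less m)
  define P where "P = monic_orth_poly M"
  have P: "degree (P r) = r" "lead_coeff (P r) = 1" "\<And>q. degree q < r \<Longrightarrow> poly_inner M (P r) q = 0"
    if "r < m" for r
    using less.IH[OF that] at_least_points_mono[OF less.prems] that
    unfolding P_def is_monic_orth_poly_def by auto
  have P_basis: "degree (P r) = r \<and> P r \<noteq> 0" if "r < m" for r
    using P[OF that] by auto
  have P_orth: "poly_inner M (P s) (P r) = 0" if "r < m" "s < m" "s \<noteq> r" for r s
    using P(3)[OF that(1), of "P s"] P(3)[OF that(2), of "P r"] P(1) that
    by (cases "s < r") (auto simp: poly_inner_commute)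
  have P_pos: "0 < poly_inner M (P r) (P r)" if "r < m" for r
    using P_basis[OF that] at_least_points_mono[OF less.prems] that
    by (intro poly_inner_self_pos) auto
  obtain Q where Q: "is_monic_orth_poly M m Q"
    using is_monic_orth_poly_gram_schmidt[OF P_basis P_orth P_pos] by blast
  have "monic_orth_poly M m = Q"
    unfolding monic_orth_poly_def
  proof (rule the_equality)
    show "P' = Q" if "is_monic_orth_poly M m P'" for P'
      by (rule is_monic_orth_poly_unique[OF less.prems that Q])
  qed (rule Q)
  then show ?case
    using Q by simp
qed

lemma
  assumes "points (m + 1)"
  shows degree_monic_orth_poly: "degree (monic_orth_poly M m) = m"
    and lead_coeff_monic_orth_poly: "lead_coeff (monic_orth_poly M m) = 1"
    and poly_inner_monic_orth_poly:
      "degree q < m \<Longrightarrow> poly_inner M (monic_orth_poly M m) q = 0"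
  using is_monic_orth_poly_monic_orth_poly[OF assms] unfolding is_monic_orth_poly_def by auto

lemma poly_inner_monic_orth_poly_self_pos:
  assumes "points (m + 1)"
  shows "0 < poly_inner M (monic_orth_poly M m) (monic_orth_poly M m)"
proof (rule poly_inner_self_pos)
  show "monic_orth_poly M m \<noteq> 0"
    using lead_coeff_monic_orth_poly[OF assms] by force
qed (use assms in \<open>simp add: degree_monic_orth_poly[OF assms]\<close>)

lemma monic_orth_poly_0:
  assumes "points 1"
  shows "monic_orth_poly M 0 = 1"
proof -
  have "degree (monic_orth_poly M 0) = 0" "coeff (monic_orth_poly M 0) 0 = 1"
    using degree_monic_orth_poly[of 0] lead_coeff_monic_orth_poly[of 0] assms by simp_all
  then have "[:1:] = monic_orth_poly M 0"
    using degree_0_id[of "monic_orth_poly M 0"] by simp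
  then show ?thesis
    by (simp add: pCons_one)
qed

lemma poly_inner_monic_orth_poly_diff:
  assumes "points (m + 1)" "degree Q = m" "lead_coeff Q = 1"
  defines "P \<equiv> monic_orth_poly M m"
  shows "poly_inner M P (Q - P) = 0"
proof (cases "Q = P")
  case False
  then have "degree (Q - P) < m"
    using degree_monic_orth_poly[OF assms(1)] lead_coeff_monic_orth_poly[OF assms(1)] assms(2,3)
    unfolding P_def by (intro degree_diff_less_if_lead_coeff_eq) auto
  then show ?thesis
    unfolding P_def by (rule poly_inner_monic_orth_poly[OF assms(1)])
qed simp

lemma poly_inner_monic_orth_poly_pythagoras:
  assumes "points (m + 1)" "degree Q = m" "lead_coeff Q = 1"
  defines "P \<equiv> monic_orth_poly M m"
  shows "poly_inner M Q Q = poly_inner M P P + poly_inner M (Q - P) (Q - P)"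
proof -
  have "poly_inner M P (Q - P) = 0"
    unfolding P_def by (rule poly_inner_monic_orth_poly_diff[OF assms(1-3)])
  moreover have "poly_inner M (Q - P) P = 0"
    using calculation by (simp add: poly_inner_commute)
  moreover have "Q = P + (Q - P)" by simp
  ultimately show ?thesis
    by (metis poly_inner_add_left poly_inner_add_right add_0 add_0_right)
qed

lemma poly_inner_monic_orth_poly_minimal:
  assumes "points (m + 1)" "degree Q = m" "lead_coeff Q = 1"
  shows "poly_inner M (monic_orth_poly M m) (monic_orth_poly M m) \<le> poly_inner M Q Q"
  using poly_inner_monic_orth_poly_pythagoras[OF assms] poly_inner_self_nonneg by simp

lemma orthonormal_poly_eq:
  "orthonormal_poly M m = smult (1 / sqrt (poly_inner M (monic_orth_poly M m) (monic_orth_poly M m)))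
     (monic_orth_poly M m)"
  unfolding orthonormal_poly_def poly_L2norm_def ..

lemma
  assumes "points (m + 1)"
  shows degree_orthonormal_poly: "degree (orthonormal_poly M m) = m"
    and orthonormal_poly_nonzero: "orthonormal_poly M m \<noteq> 0"
    and poly_inner_orthonormal_poly:
      "degree q < m \<Longrightarrow> poly_inner M (orthonormal_poly M m) q = 0"
  using degree_monic_orth_poly[OF assms] lead_coeff_monic_orth_poly[OF assms]
    poly_inner_monic_orth_poly_self_pos[OF assms] poly_inner_monic_orth_poly[OF assms]
  unfolding orthonormal_poly_eq by (auto simp: poly_inner_smult_left)

lemma poly_inner_orthonormal_poly_pair:
  assumes "points (i + 1)" "points (j + 1)"
  shows "poly_inner M (orthonormal_poly M i) (orthonormal_poly M j) = (if i = j then 1 else 0)"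
proof (cases i j rule: linorder_cases)
  case less
  then have "poly_inner M (orthonormal_poly M j) (orthonormal_poly M i) = 0"
    using poly_inner_orthonormal_poly[OF assms(2)] degree_orthonormal_poly[OF assms(1)] by simp
  then show ?thesis
    using less by (simp add: poly_inner_commute[of "orthonormal_poly M i"])
next
  case equal
  define P where "P = monic_orth_poly M i"
  have "0 < poly_inner M P P"
    unfolding P_def by (rule poly_inner_monic_orth_poly_self_pos[OF assms(1)])
  moreover have "poly_inner M (orthonormal_poly M i) (orthonormal_poly M i)
      = (1 / sqrt (poly_inner M P P)) * ((1 / sqrt (poly_inner M P P)) * poly_inner M P P)"
    unfolding orthonormal_poly_eq P_def by (simp only: poly_inner_smult_left poly_inner_smult_right)
  ultimately show ?thesis
    using equal by (simp add: field_simps)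
next
  case greater
  then show ?thesis
    using poly_inner_orthonormal_poly[OF assms(1)] degree_orthonormal_poly[OF assms(2)] by simp
qed

lemma orthonormal_expansion:
  assumes "points (d + 1)" "degree q \<le> d"
  shows "q = (\<Sum>r\<le>d. smult (poly_inner M (orthonormal_poly M r) q) (orthonormal_poly M r))"
proof -
  have points: "points (r + 1)" if "r \<le> d" for r
    using at_least_points_mono[OF assms(1)] that by simp
  obtain a where a: "q = (\<Sum>r\<le>d. smult (a r) (orthonormal_poly M r))"
    using degree_basis_span[OF _ assms(2)] degree_orthonormal_poly[OF points]
      orthonormal_poly_nonzero[OF points] by blast
  have "poly_inner M (orthonormal_poly M s) q = a s" if "s \<le> d" for s
  proof -
    have "poly_inner M (orthonormal_poly M s) q
        = (\<Sum>r\<le>d. a r * poly_inner M (orthonormal_poly M s) (orthonormal_poly M r))"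
      unfolding a by (simp add: poly_inner_sum_right poly_inner_smult_right)
    also have "\<dots> = (\<Sum>r\<le>d. if r = s then a r else 0)"
      using that points by (intro sum.cong) (auto simp: poly_inner_orthonormal_poly_pair)
    also have "\<dots> = a s"
      using that by simp
    finally show ?thesis .
  qed
  then have "(\<Sum>r\<le>d. smult (poly_inner M (orthonormal_poly M r) q) (orthonormal_poly M r))
      = (\<Sum>r\<le>d. smult (a r) (orthonormal_poly M r))"
    by (intro sum.cong) simp_all
  then show ?thesis
    using a by simp
qed

lemma AE_eq_poly_of_degree_less_card:
  assumes "finite (msupp M)" "msupp M \<noteq> {}"
  obtains q' where "degree q' < card (msupp M)" "AE x in M. poly q x = poly q' x"
proof
  define W where "W = (\<Prod>s\<in>msupp M. [:-s, 1:])"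
  have "W \<noteq> 0"
    unfolding W_def using assms(1) by (simp add: prod_zero_iff)
  moreover have "degree W \<le> card (msupp M)"
    unfolding W_def using degree_prod_sum_le[OF assms(1), of "\<lambda>s. [:-s, 1::real:]"] by simp
  ultimately show "degree (q mod W) < card (msupp M)"
    using degree_mod_less[of W q] assms by (auto simp: card_gt_0_iff)
  have W_root: "poly W x = 0" if "x \<in> msupp M" for x
    unfolding W_def poly_prod using assms(1) that by (auto intro!: prod_zero)
  show "AE x in M. poly q x = poly (q mod W) x"
    using AE_in_msupp
  proof eventually_elim
    case (elim x)
    have "q = q div W * W + q mod W"
      by simp
    then have "poly q x = poly (q div W * W + q mod W) x"
      by (rule arg_cong)
    then show ?case
      using W_root[OF elim] by (simp only: poly_add poly_mult mult_zero_right add_0)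
  qed
qed

text \<open>When the support is finite, \<open>q\<close> is first replaced by a polynomial of degree less than the
  number of support points that agrees with it almost everywhere.\<close>

lemma poly_inner_parseval:
  assumes "points 1"
  shows "poly_inner M h q =
    (\<Sum>r | r \<le> degree q \<and> points (r + 1).
       poly_inner M h (orthonormal_poly M r) * poly_inner M (orthonormal_poly M r) q)"
proof -
  obtain d q' where d: "points (d + 1)" "{r. r \<le> degree q \<and> points (r + 1)} = {..d}"
    and q': "degree q' \<le> d" "AE x in M. poly q x = poly q' x"
  proof (cases "points (degree q + 1)")
    case True
    then show ?thesis
      using that[of "degree q" q] at_least_points_mono[OF True] by auto
  next
    case False
    then have fin: "finite (msupp M)" "card (msupp M) \<le> degree q"
      unfolding at_least_points_iff by auto
    moreover have "msupp M \<noteq> {}" "1 \<le> card (msupp M)"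
      using assms fin unfolding at_least_points_iff by auto
    ultimately obtain q' where "degree q' < card (msupp M)" "AE x in M. poly q x = poly q' x"
      using AE_eq_poly_of_degree_less_card by blast
    moreover have "{r. r \<le> degree q \<and> points (r + 1)} = {..card (msupp M) - 1}"
      using fin \<open>1 \<le> card (msupp M)\<close> unfolding at_least_points_iff by auto
    moreover have "points (card (msupp M) - 1 + 1)"
      using fin \<open>1 \<le> card (msupp M)\<close> unfolding at_least_points_iff by simp
    ultimately show ?thesis
      using that[of "card (msupp M) - 1" q'] by simp
  qed
  have "poly_inner M h q = poly_inner M h q'"
    by (rule poly_inner_cong_AE[OF q'(2)])
  also have "\<dots> = (\<Sum>r\<le>d. poly_inner M h (orthonormal_poly M r) * poly_inner M (orthonormal_poly M r) q')"
    by (subst orthonormal_expansion[OF d(1) q'(1)])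
      (simp add: poly_inner_sum_right poly_inner_smult_right mult.commute)
  finally show ?thesis
    unfolding d(2) poly_inner_cong_AE[OF q'(2)] .
qed

section \<open>Powers of the Jacobi matrix\<close>

text \<open>Parseval's identity for \<open>x p\<^sub>l\<^sub>-\<^sub>1\<close>, read as a row vector times the \<open>l\<close>-th column of \<open>J\<close>.\<close>

lemma suminf_poly_inner_orthonormal_poly_mult_jacobi_matrix:
  assumes "1 \<le> l" "points l"
  shows "(\<Sum>r. (if 1 \<le> r \<and> points r then poly_inner M h (orthonormal_poly M (r - 1)) else 0)
      * jacobi_matrix M r l)
    = poly_inner M h ([:0, 1:] * orthonormal_poly M (l - 1))"
proof -
  let ?p = "orthonormal_poly M" and ?xp = "[:0, 1:] * orthonormal_poly M (l - 1)"
  have l: "points (l - 1 + 1)" "points 1"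
    using assms at_least_points_mono[of l "msupp M" 1] by auto
  have deg: "degree ?xp = l"
    using assms(1) orthonormal_poly_nonzero[OF l(1)] degree_orthonormal_poly[OF l(1)]
    by (subst degree_mult_eq) auto
  define A where "A = {r. r \<le> l \<and> points (r + 1)}"
  define T where "T r = poly_inner M h (?p r) * poly_inner M (?p r) ?xp" for r
  have summand: "(if 1 \<le> r \<and> points r then poly_inner M h (?p (r - 1)) else 0) * jacobi_matrix M r l
      = (if r \<in> Suc ` A then T (r - 1) else 0)" for r
  proof (cases r)
    case (Suc r')
    have "poly_inner M (?p r') ?xp = 0" if "points (r' + 1)" "l < r'"
      using poly_inner_orthonormal_poly[OF that(1)] deg that(2) by simp
    then show ?thesis
      unfolding Suc using assms by (auto simp: jacobi_matrix_def A_def T_def not_le image_iff)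
  qed (simp add: jacobi_matrix_def)
  have "(\<Sum>r. (if 1 \<le> r \<and> points r then poly_inner M h (?p (r - 1)) else 0) * jacobi_matrix M r l)
      = (\<Sum>r\<in>Suc ` A. if r \<in> Suc ` A then T (r - 1) else 0)"
    unfolding summand by (rule suminf_finite) (auto simp: A_def)
  also have "\<dots> = (\<Sum>r\<in>Suc ` A. T (r - 1))"
    by (rule sum.cong) simp_all
  also have "\<dots> = (\<Sum>r\<in>A. T r)"
    by (simp add: sum.reindex)
  also have "\<dots> = poly_inner M h ?xp"
    using poly_inner_parseval[OF l(2), of h ?xp] deg unfolding A_def T_def by simp
  finally show ?thesis .
qed

lemma mat_pow_inf_1: "mat_pow_inf A 1 = A"
proof (intro ext)
  fix i j
  have "mat_pow_inf A 1 i j = (\<Sum>r. (if i = r then 1 else 0) * A r j)"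
    by (simp add: mat_mult_inf_def)
  also have "\<dots> = (\<Sum>r\<in>{i}. (if i = r then 1 else 0) * A r j)"
    by (rule suminf_finite) auto
  finally show "mat_pow_inf A 1 i j = A i j"
    by simp
qed

lemma mat_pow_inf_jacobi_matrix:
  assumes "1 \<le> j"
  shows "mat_pow_inf (jacobi_matrix M) j i l =
    (if 1 \<le> i \<and> 1 \<le> l \<and> points i \<and> points l
     then poly_inner M (orthonormal_poly M (i - 1)) ([:0, 1:] ^ j * orthonormal_poly M (l - 1))
     else 0)"
  using assms
proof (induction j arbitrary: l rule: nat_induct_at_least)
  case base
  show ?case
    unfolding mat_pow_inf_1 by (simp add: jacobi_matrix_def)
next
  case (Suc j)
  let ?J = "jacobi_matrix M" and ?p = "orthonormal_poly M"
  have power: "mat_pow_inf ?J (Suc j) i l = (\<Sum>r. mat_pow_inf ?J j i r * ?J r l)"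
    by (simp add: mat_mult_inf_def)
  show ?case
  proof (cases "1 \<le> i \<and> 1 \<le> l \<and> points i \<and> points l")
    case False
    then have "(\<lambda>r. mat_pow_inf ?J j i r * ?J r l) = (\<lambda>r. 0)"
      using Suc.IH unfolding jacobi_matrix_def by (intro ext) auto
    then show ?thesis
      unfolding if_not_P[OF False] power by simp
  next
    case True
    have "(\<Sum>r. mat_pow_inf ?J j i r * ?J r l)
        = (\<Sum>r. (if 1 \<le> r \<and> points r then poly_inner M ([:0, 1:] ^ j * ?p (i - 1)) (?p (r - 1)) else 0)
            * ?J r l)"
      using True by (simp add: Suc.IH poly_inner_mult_left cong: if_cong)
    also have "\<dots> = poly_inner M ([:0, 1:] ^ j * ?p (i - 1)) ([:0, 1:] * ?p (l - 1))"
      using True by (intro suminf_poly_inner_orthonormal_poly_mult_jacobi_matrix) auto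
    also have "\<dots> = poly_inner M (?p (i - 1)) ([:0, 1:] ^ Suc j * ?p (l - 1))"
      by (simp add: poly_inner_mult_left mult.assoc mult.left_commute)
    finally show ?thesis
      using power True by simp
  qed
qed

lemma mat_pow_inf_jacobi_matrix_diag:
  assumes "points (m + 1)" "1 \<le> j"
  defines "P \<equiv> monic_orth_poly M m"
  shows "mat_pow_inf (jacobi_matrix M) j (m + 1) (m + 1)
    = poly_inner M P ([:0, 1:] ^ j * P) / poly_inner M P P"
proof -
  have "0 < poly_inner M P P"
    unfolding P_def by (rule poly_inner_monic_orth_poly_self_pos[OF assms(1)])
  moreover have "mat_pow_inf (jacobi_matrix M) j (m + 1) (m + 1)
      = (1 / sqrt (poly_inner M P P)) * ((1 / sqrt (poly_inner M P P)) * poly_inner M P ([:0, 1:] ^ j * P))"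
    using mat_pow_inf_jacobi_matrix[OF assms(2)] assms(1)
    unfolding orthonormal_poly_eq P_def by (simp add: poly_inner_smult_left poly_inner_smult_right)
  ultimately show ?thesis
    by (simp add: field_simps)
qed

end

section \<open>Exponential tilting\<close>

lemma abs_exp_minus_one_minus_le: "\<bar>exp y - 1 - y\<bar> \<le> y\<^sup>2 * exp \<bar>y\<bar>" for y :: real
proof -
  obtain t where t: "\<bar>t\<bar> \<le> \<bar>y\<bar>" "exp y = (\<Sum>m<2. y ^ m / fact m) + exp t / fact 2 * y ^ 2"
    using Maclaurin_exp_le[of y 2] by blast
  have "exp t / 2 \<le> exp \<bar>y\<bar>"
    using t(1) exp_gt_zero[of t] exp_le_cancel_iff[of t "\<bar>y\<bar>"] by linarith
  then have "exp t / 2 * y\<^sup>2 \<le> exp \<bar>y\<bar> * y\<^sup>2"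
    by (rule mult_right_mono) simp
  moreover have "\<bar>exp y - 1 - y\<bar> = exp t / 2 * y\<^sup>2"
    using t(2) by (simp add: eval_nat_numeral)
  ultimately show ?thesis
    by (simp add: mult.commute)
qed

lemma has_real_derivative_if_quadratic_contact:
  fixes f g K :: "real \<Rightarrow> real"
  assumes "(g has_real_derivative D) (at a)" "f a = g a"
    and "\<And>s. \<bar>f s - g s\<bar> \<le> (s - a)\<^sup>2 * K s" and "isCont K a"
  shows "(f has_real_derivative D) (at a)"
proof -
  have "((\<lambda>s. f s - g s) has_real_derivative 0) (at a)"
    unfolding has_field_derivative_iff
  proof (rule Lim_null_comparison)
    have "norm ((f s - g s - (f a - g a)) / (s - a)) \<le> \<bar>s - a\<bar> * \<bar>K s\<bar>" if "s \<noteq> a" for s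
    proof -
      have "\<bar>f s - g s\<bar> \<le> (s - a)\<^sup>2 * \<bar>K s\<bar>"
        using assms(3)[of s] mult_left_mono[OF abs_ge_self[of "K s"], of "(s - a)\<^sup>2"] by simp
      also have "\<dots> = \<bar>s - a\<bar> * (\<bar>s - a\<bar> * \<bar>K s\<bar>)"
        by (metis abs_mult_self_eq mult.assoc power2_eq_square)
      finally have "\<bar>f s - g s\<bar> \<le> \<bar>s - a\<bar> * (\<bar>s - a\<bar> * \<bar>K s\<bar>)" .
      then show ?thesis
        using assms(2) that by (simp add: abs_divide divide_le_eq mult.commute)
    qed
    then show "\<forall>\<^sub>F s in at a. norm ((f s - g s - (f a - g a)) / (s - a)) \<le> \<bar>s - a\<bar> * \<bar>K s\<bar>"
      unfolding eventually_at_filter by simp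
    have "((\<lambda>s. \<bar>s - a\<bar> * \<bar>K s\<bar>) \<longlongrightarrow> \<bar>a - a\<bar> * \<bar>K a\<bar>) (at a)"
      using assms(4) unfolding isCont_def by (intro tendsto_intros)
    then show "((\<lambda>s. \<bar>s - a\<bar> * \<bar>K s\<bar>) \<longlongrightarrow> 0) (at a)"
      by simp
  qed
  from DERIV_add[OF this assms(1)] show ?thesis
    by simp
qed

definition exp_tilt :: "real measure \<Rightarrow> (real \<Rightarrow> real) \<Rightarrow> real \<Rightarrow> real measure" where
  "exp_tilt M g s = density M (\<lambda>x. ennreal (exp (g x * s)))"

context compact_support_measure
begin

context
  fixes g :: "real \<Rightarrow> real"
  assumes continuous_g: "continuous_on UNIV g"
begin

lemma continuous_on_exp_tilt_density: "continuous_on UNIV (\<lambda>x. exp (g x * s))"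
  by (intro continuous_intros continuous_g)

lemma
  shows compact_support_measure_exp_tilt: "compact_support_measure (exp_tilt M g s)"
    and msupp_exp_tilt: "msupp (exp_tilt M g s) = msupp M"
  unfolding exp_tilt_def
  by (rule compact_support_measure_density msupp_density, rule continuous_on_exp_tilt_density, simp)+

lemma integral_exp_tilt:
  "continuous_on UNIV f \<Longrightarrow> integral\<^sup>L (exp_tilt M g s) f = (\<integral>x. exp (g x * s) * f x \<partial>M)"
  unfolding exp_tilt_def by (rule integral_density_continuous[OF continuous_on_exp_tilt_density]) simp

lemma integral_exp_tilt_shift:
  assumes "continuous_on UNIV f"
  shows "integral\<^sup>L (exp_tilt M g b) f
    = integral\<^sup>L (exp_tilt M g a) (\<lambda>x. exp (g x * (b - a)) * f x)"
proof -
  have "exp (g x * a) * exp (g x * (b - a)) = exp (g x * b)" for x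
    by (simp add: algebra_simps flip: exp_add)
  moreover have "continuous_on UNIV (\<lambda>x. exp (g x * (b - a)) * f x)"
    by (intro continuous_intros continuous_g assms)
  ultimately show ?thesis
    using assms by (simp add: integral_exp_tilt mult.assoc[symmetric])
qed

context
  fixes B :: real
  assumes g_bound: "\<And>x. x \<in> msupp M \<Longrightarrow> \<bar>g x\<bar> \<le> B"
begin

lemma abs_mult_le_on_msupp: "x \<in> msupp M \<Longrightarrow> \<bar>g x * d\<bar> \<le> B * \<bar>d\<bar>"
  using g_bound[of x] by (simp add: abs_mult mult_right_mono)

lemma integral_exp_tilt_le:
  assumes "continuous_on UNIV f" "\<And>x. x \<in> msupp M \<Longrightarrow> 0 \<le> f x"
  shows "integral\<^sup>L (exp_tilt M g b) f \<le> exp (B * \<bar>b - a\<bar>) * integral\<^sup>L (exp_tilt M g a) f"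
proof -
  interpret tilt: compact_support_measure "exp_tilt M g a"
    by (rule compact_support_measure_exp_tilt)
  have "integral\<^sup>L (exp_tilt M g b) f = integral\<^sup>L (exp_tilt M g a) (\<lambda>x. exp (g x * (b - a)) * f x)"
    by (rule integral_exp_tilt_shift[OF assms(1)])
  also have "\<dots> \<le> integral\<^sup>L (exp_tilt M g a) (\<lambda>x. exp (B * \<bar>b - a\<bar>) * f x)"
  proof (rule tilt.integral_mono_on_msupp)
    fix x assume "x \<in> msupp (exp_tilt M g a)"
    then have "x \<in> msupp M"
      by (simp add: msupp_exp_tilt)
    then show "exp (g x * (b - a)) * f x \<le> exp (B * \<bar>b - a\<bar>) * f x"
      using abs_mult_le_on_msupp[of x "b - a"] assms(2)
      by (intro mult_right_mono) (simp_all add: abs_le_iff)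
  qed (intro continuous_intros continuous_g assms(1))+
  also have "\<dots> = exp (B * \<bar>b - a\<bar>) * integral\<^sup>L (exp_tilt M g a) f"
    by simp
  finally show ?thesis .
qed

lemma abs_exp_mult_remainder_le:
  assumes "x \<in> msupp M"
  shows "\<bar>exp (g x * d) - 1 - g x * d\<bar> \<le> d\<^sup>2 * B\<^sup>2 * exp (B * \<bar>d\<bar>)"
proof -
  have y: "\<bar>g x * d\<bar> \<le> B * \<bar>d\<bar>"
    by (rule abs_mult_le_on_msupp[OF assms])
  have "(g x * d)\<^sup>2 = \<bar>g x * d\<bar>\<^sup>2"
    by simp
  also have "\<dots> \<le> (B * \<bar>d\<bar>)\<^sup>2"
    using y by (intro power_mono) simp_all
  also have "\<dots> = d\<^sup>2 * B\<^sup>2"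
    by (simp add: power_mult_distrib)
  finally have "(g x * d)\<^sup>2 \<le> d\<^sup>2 * B\<^sup>2" .
  moreover have "exp \<bar>g x * d\<bar> \<le> exp (B * \<bar>d\<bar>)"
    using y by simp
  ultimately have "(g x * d)\<^sup>2 * exp \<bar>g x * d\<bar> \<le> d\<^sup>2 * B\<^sup>2 * exp (B * \<bar>d\<bar>)"
    by (intro mult_mono) simp_all
  then show ?thesis
    using abs_exp_minus_one_minus_le[of "g x * d"] by linarith
qed

lemma integral_exp_tilt_taylor:
  assumes "continuous_on UNIV f"
  shows "\<bar>integral\<^sup>L (exp_tilt M g b) f - integral\<^sup>L (exp_tilt M g a) f
      - (b - a) * integral\<^sup>L (exp_tilt M g a) (\<lambda>x. g x * f x)\<bar>
    \<le> (b - a)\<^sup>2 * B\<^sup>2 * exp (B * \<bar>b - a\<bar>) * integral\<^sup>L (exp_tilt M g a) (\<lambda>x. \<bar>f x\<bar>)"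
proof -
  interpret tilt: compact_support_measure "exp_tilt M g a"
    by (rule compact_support_measure_exp_tilt)
  define y where "y x = g x * (b - a)" for x
  define K where "K = (b - a)\<^sup>2 * B\<^sup>2 * exp (B * \<bar>b - a\<bar>)"
  have continuous_y: "continuous_on UNIV y"
    unfolding y_def by (intro continuous_intros continuous_g)
  have remainder_le: "\<bar>exp (y x) - 1 - y x\<bar> \<le> K" if "x \<in> msupp M" for x
    unfolding y_def K_def by (rule abs_exp_mult_remainder_le[OF that])
  have "integral\<^sup>L (exp_tilt M g b) f - integral\<^sup>L (exp_tilt M g a) f
      - (b - a) * integral\<^sup>L (exp_tilt M g a) (\<lambda>x. g x * f x)
      = integral\<^sup>L (exp_tilt M g a) (\<lambda>x. (exp (y x) - 1 - y x) * f x)"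
  proof -
    have "integral\<^sup>L (exp_tilt M g a) (\<lambda>x. (exp (y x) - 1 - y x) * f x)
        = integral\<^sup>L (exp_tilt M g a) (\<lambda>x. exp (y x) * f x - f x - (b - a) * (g x * f x))"
      unfolding y_def by (simp add: algebra_simps)
    also have "\<dots> = integral\<^sup>L (exp_tilt M g a) (\<lambda>x. exp (y x) * f x) - integral\<^sup>L (exp_tilt M g a) f
        - (b - a) * integral\<^sup>L (exp_tilt M g a) (\<lambda>x. g x * f x)"
      using assms continuous_y continuous_g
      by (simp add: tilt.integrable_continuous continuous_intros)
    finally show ?thesis
      unfolding integral_exp_tilt_shift[OF assms, of b a] y_def by simp
  qed
  also have "\<bar>\<dots>\<bar> \<le> integral\<^sup>L (exp_tilt M g a) (\<lambda>x. \<bar>(exp (y x) - 1 - y x) * f x\<bar>)"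
    by (rule integral_abs_bound)
  also have "\<dots> \<le> integral\<^sup>L (exp_tilt M g a) (\<lambda>x. K * \<bar>f x\<bar>)"
  proof (rule tilt.integral_mono_on_msupp)
    fix x assume "x \<in> msupp (exp_tilt M g a)"
    then show "\<bar>(exp (y x) - 1 - y x) * f x\<bar> \<le> K * \<bar>f x\<bar>"
      using remainder_le[of x] by (simp add: msupp_exp_tilt abs_mult mult_right_mono)
  qed (intro continuous_intros continuous_y assms)+
  also have "\<dots> = K * integral\<^sup>L (exp_tilt M g a) (\<lambda>x. \<bar>f x\<bar>)"
    by simp
  finally show ?thesis
    unfolding K_def .
qed

end

lemma has_real_derivative_integral_exp_tilt:
  assumes "continuous_on UNIV f"
  shows "((\<lambda>s. integral\<^sup>L (exp_tilt M g s) f)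
    has_real_derivative integral\<^sup>L (exp_tilt M g a) (\<lambda>x. g x * f x)) (at a)"
proof -
  obtain B where B: "\<And>x. x \<in> msupp M \<Longrightarrow> \<bar>g x\<bar> \<le> B"
    using bounded_on_msupp[OF continuous_g] by blast
  define I where "I s = integral\<^sup>L (exp_tilt M g s) f" for s
  define D where "D = integral\<^sup>L (exp_tilt M g a) (\<lambda>x. g x * f x)"
  define K where "K s = B\<^sup>2 * exp (B * \<bar>s - a\<bar>) * integral\<^sup>L (exp_tilt M g a) (\<lambda>x. \<bar>f x\<bar>)" for s
  have "(I has_real_derivative D) (at a)"
  proof (rule has_real_derivative_if_quadratic_contact)
    show "((\<lambda>s. I a + (s - a) * D) has_real_derivative D) (at a)"
      by (auto intro!: derivative_eq_intros)
    show "\<bar>I s - (I a + (s - a) * D)\<bar> \<le> (s - a)\<^sup>2 * K s" for s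
    proof -
      have "I s - (I a + (s - a) * D) = I s - I a - (s - a) * D"
        by simp
      then show ?thesis
        using integral_exp_tilt_taylor[OF B assms, of s a] unfolding I_def D_def K_def
        by (simp only: mult.assoc)
    qed
    show "isCont K a"
      unfolding K_def by (intro continuous_intros)
  qed simp
  then show ?thesis
    unfolding I_def D_def .
qed

end

context
  fixes G :: "real poly"
begin

lemma compact_support_measure_exp_tilt_poly: "compact_support_measure (exp_tilt M (poly G) s)"
  by (rule compact_support_measure_exp_tilt) (intro continuous_intros)

lemma msupp_exp_tilt_poly: "msupp (exp_tilt M (poly G) s) = msupp M"
  by (rule msupp_exp_tilt) (intro continuous_intros)

lemma poly_inner_exp_tilt_one_pos:
  assumes "points 1"
  shows "0 < poly_inner (exp_tilt M (poly G) s) 1 1"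
proof -
  interpret tilt: compact_support_measure "exp_tilt M (poly G) s"
    by (rule compact_support_measure_exp_tilt_poly)
  show ?thesis
    using assms by (intro tilt.poly_inner_self_pos) (simp_all add: msupp_exp_tilt_poly)
qed

section \<open>Variation of the norm of the monic orthogonal polynomial\<close>

lemma has_real_derivative_poly_inner_exp_tilt:
  "((\<lambda>s. poly_inner (exp_tilt M (poly G) s) p q)
    has_real_derivative poly_inner (exp_tilt M (poly G) a) (G * p) q) (at a)"
proof -
  have "((\<lambda>s. integral\<^sup>L (exp_tilt M (poly G) s) (\<lambda>x. poly p x * poly q x)) has_real_derivative
      integral\<^sup>L (exp_tilt M (poly G) a) (\<lambda>x. poly G x * (poly p x * poly q x))) (at a)"
    by (rule has_real_derivative_integral_exp_tilt) (intro continuous_intros)+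
  then show ?thesis
    unfolding poly_inner_def by (simp add: mult.assoc)
qed

lemma monic_orth_poly_exp_tilt_norm_sq_le:
  assumes "points (n + 1)"
  defines "P \<equiv> \<lambda>s. monic_orth_poly (exp_tilt M (poly G) s) n"
  shows "poly_inner (exp_tilt M (poly G) s) (P s) (P s) \<le> poly_inner (exp_tilt M (poly G) s) (P u) (P u)"
proof -
  interpret tilt_u: compact_support_measure "exp_tilt M (poly G) u"
    by (rule compact_support_measure_exp_tilt_poly)
  interpret tilt_s: compact_support_measure "exp_tilt M (poly G) s"
    by (rule compact_support_measure_exp_tilt_poly)
  have "tilt_u.points (n + 1)" "tilt_s.points (n + 1)"
    using assms(1) by (simp_all add: msupp_exp_tilt_poly)
  then show ?thesis
    unfolding P_def
    by (intro tilt_s.poly_inner_monic_orth_poly_minimal tilt_u.degree_monic_orth_poly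
        tilt_u.lead_coeff_monic_orth_poly)
qed

context
  fixes B :: real
  assumes B_nonneg: "0 \<le> B" and G_bound: "\<And>x. x \<in> msupp M \<Longrightarrow> \<bar>poly G x\<bar> \<le> B"
begin

lemma poly_inner_exp_tilt_le:
  "poly_inner (exp_tilt M (poly G) b) q q \<le> exp (B * \<bar>b - a\<bar>) * poly_inner (exp_tilt M (poly G) a) q q"
  unfolding poly_inner_def
  by (rule integral_exp_tilt_le[OF _ G_bound]) (intro continuous_intros | simp)+

lemma poly_inner_exp_tilt_mult_le:
  "poly_inner (exp_tilt M (poly G) s) (G * q) (G * q) \<le> B\<^sup>2 * poly_inner (exp_tilt M (poly G) s) q q"
proof -
  interpret tilt: compact_support_measure "exp_tilt M (poly G) s"
    by (rule compact_support_measure_exp_tilt_poly)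
  have "poly_inner (exp_tilt M (poly G) s) (G * q) (G * q)
      = integral\<^sup>L (exp_tilt M (poly G) s) (\<lambda>x. (poly G x)\<^sup>2 * (poly q x * poly q x))"
    unfolding poly_inner_def by (simp add: power2_eq_square ac_simps)
  also have "\<dots> \<le> integral\<^sup>L (exp_tilt M (poly G) s) (\<lambda>x. B\<^sup>2 * (poly q x * poly q x))"
  proof (rule tilt.integral_mono_on_msupp)
    fix x assume "x \<in> msupp (exp_tilt M (poly G) s)"
    then have "(poly G x)\<^sup>2 \<le> B\<^sup>2"
      using G_bound[of x] B_nonneg by (simp add: msupp_exp_tilt_poly abs_le_square_iff[symmetric])
    then show "(poly G x)\<^sup>2 * (poly q x * poly q x) \<le> B\<^sup>2 * (poly q x * poly q x)"
      by (rule mult_right_mono) simp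
  qed (intro continuous_intros)+
  also have "\<dots> = B\<^sup>2 * poly_inner (exp_tilt M (poly G) s) q q"
    unfolding poly_inner_def by simp
  finally show ?thesis .
qed

lemma abs_poly_inner_exp_tilt_mult_le:
  assumes "\<xi> \<in> closed_segment u s"
  shows "\<bar>poly_inner (exp_tilt M (poly G) \<xi>) (G * p) q\<bar>
    \<le> B * exp (B * \<bar>s - u\<bar>) * sqrt (poly_inner (exp_tilt M (poly G) u) p p)
        * sqrt (poly_inner (exp_tilt M (poly G) s) q q)"
proof -
  let ?ip = "\<lambda>s. poly_inner (exp_tilt M (poly G) s)"
  define e where "e = exp (B * \<bar>s - u\<bar>)"
  interpret tilt_u: compact_support_measure "exp_tilt M (poly G) u"
    by (rule compact_support_measure_exp_tilt_poly)
  interpret tilt_s: compact_support_measure "exp_tilt M (poly G) s"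
    by (rule compact_support_measure_exp_tilt_poly)
  interpret tilt: compact_support_measure "exp_tilt M (poly G) \<xi>"
    by (rule compact_support_measure_exp_tilt_poly)
  have "\<bar>\<xi> - u\<bar> \<le> \<bar>s - u\<bar>" "\<bar>\<xi> - s\<bar> \<le> \<bar>s - u\<bar>"
    using dist_in_closed_segment[OF assms] abs_minus_commute[of u s] by (simp_all add: dist_real_def)
  then have e_u: "exp (B * \<bar>\<xi> - u\<bar>) \<le> e" and e_s: "exp (B * \<bar>\<xi> - s\<bar>) \<le> e"
    using B_nonneg by (simp_all add: e_def mult_left_mono)
  have p: "?ip \<xi> p p \<le> e * ?ip u p p"
    using poly_inner_exp_tilt_le[where b = \<xi> and a = u and q = p]
      mult_right_mono[OF e_u tilt_u.poly_inner_self_nonneg[of p]] by linarith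
  have q: "?ip \<xi> q q \<le> e * ?ip s q q"
    using poly_inner_exp_tilt_le[where b = \<xi> and a = s and q = q]
      mult_right_mono[OF e_s tilt_s.poly_inner_self_nonneg[of q]] by linarith
  have Gp: "?ip \<xi> (G * p) (G * p) \<le> B\<^sup>2 * (e * ?ip u p p)"
    using poly_inner_exp_tilt_mult_le[of \<xi> p] mult_left_mono[OF p, of "B\<^sup>2"] by simp
  have "(?ip \<xi> (G * p) q)\<^sup>2 \<le> ?ip \<xi> (G * p) (G * p) * ?ip \<xi> q q"
    by (rule tilt.poly_inner_Cauchy_Schwarz)
  also have "\<dots> \<le> (B\<^sup>2 * (e * ?ip u p p)) * (e * ?ip s q q)"
    using Gp q tilt.poly_inner_self_nonneg[of q] tilt_u.poly_inner_self_nonneg[of p]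
    by (intro mult_mono) (simp_all add: e_def)
  also have "\<dots> = (B * e * sqrt (?ip u p p) * sqrt (?ip s q q))\<^sup>2"
    using tilt_u.poly_inner_self_nonneg[of p] tilt_s.poly_inner_self_nonneg[of q]
    by (simp add: power_mult_distrib power2_eq_square[of e])
  finally show ?thesis
    using B_nonneg tilt_u.poly_inner_self_nonneg[of p] tilt_s.poly_inner_self_nonneg[of q]
    unfolding e_def by (simp add: abs_le_square_iff[symmetric])
qed

text \<open>A mean value estimate: the derivative in the tilt parameter is bounded by the previous lemma.\<close>

lemma abs_poly_inner_exp_tilt_le:
  assumes "poly_inner (exp_tilt M (poly G) u) p q = 0"
  shows "\<bar>poly_inner (exp_tilt M (poly G) s) p q\<bar>
    \<le> \<bar>s - u\<bar> * (B * exp (B * \<bar>s - u\<bar>) * sqrt (poly_inner (exp_tilt M (poly G) u) p p)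
        * sqrt (poly_inner (exp_tilt M (poly G) s) q q))"
proof -
  let ?ip = "\<lambda>s. poly_inner (exp_tilt M (poly G) s)"
  define C where "C = B * exp (B * \<bar>s - u\<bar>) * sqrt (?ip u p p) * sqrt (?ip s q q)"
  have "norm (?ip s p q - ?ip u p q) \<le> C * norm (s - u)"
  proof (rule field_differentiable_bound[where f = "\<lambda>s. ?ip s p q" and f' = "\<lambda>s. ?ip s (G * p) q"])
    show "((\<lambda>s. ?ip s p q) has_field_derivative ?ip \<xi> (G * p) q) (at \<xi> within closed_segment u s)"
      for \<xi>
      by (rule has_field_derivative_at_within[OF has_real_derivative_poly_inner_exp_tilt])
    show "norm (?ip \<xi> (G * p) q) \<le> C" if "\<xi> \<in> closed_segment u s" for \<xi>
      using abs_poly_inner_exp_tilt_mult_le[OF that] unfolding C_def by simp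
  qed auto
  then show ?thesis
    using assms unfolding C_def by (simp add: ac_simps)
qed

text \<open>Write \<open>P\<^sub>n(s) = P\<^sub>n(u) + D\<close>: by the previous lemma the cross term is \<open>O(\<bar>s - u\<bar> \<parallel>D\<parallel>)\<close>,
  and completing the square in \<open>\<parallel>D\<parallel>\<close> leaves an error of order \<open>(s - u)\<^sup>2\<close>.\<close>

lemma monic_orth_poly_exp_tilt_norm_sq_ge:
  assumes "points (n + 1)"
  defines "P \<equiv> \<lambda>s. monic_orth_poly (exp_tilt M (poly G) s) n"
  defines "N \<equiv> \<lambda>s. poly_inner (exp_tilt M (poly G) s) (P s) (P s)"
  shows "poly_inner (exp_tilt M (poly G) s) (P u) (P u) - (s - u)\<^sup>2 * (B\<^sup>2 * exp (2 * B * \<bar>s - u\<bar>) * N u)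
    \<le> N s"
proof -
  let ?ip = "\<lambda>s. poly_inner (exp_tilt M (poly G) s)"
  interpret tilt_u: compact_support_measure "exp_tilt M (poly G) u"
    by (rule compact_support_measure_exp_tilt_poly)
  interpret tilt_s: compact_support_measure "exp_tilt M (poly G) s"
    by (rule compact_support_measure_exp_tilt_poly)
  have points: "tilt_u.points (n + 1)" "tilt_s.points (n + 1)"
    using assms(1) by (simp_all add: msupp_exp_tilt_poly)
  define D where "D = P s - P u"
  have orth_u: "?ip u (P u) D = 0"
    unfolding D_def P_def using points
    by (intro tilt_u.poly_inner_monic_orth_poly_diff tilt_s.degree_monic_orth_poly
        tilt_s.lead_coeff_monic_orth_poly)
  define c where "c = \<bar>s - u\<bar> * (B * exp (B * \<bar>s - u\<bar>) * sqrt (N u))"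
  define d where "d = sqrt (?ip s D D)"
  from abs_poly_inner_exp_tilt_le[OF orth_u, of s]
  have cross: "\<bar>?ip s (P u) D\<bar> \<le> c * d"
    unfolding c_def d_def N_def by (simp add: ac_simps)
  have "P s = P u + D"
    unfolding D_def by simp
  moreover have "?ip s D (P u) = ?ip s (P u) D"
    by (rule tilt_s.poly_inner_commute)
  moreover have "d\<^sup>2 = ?ip s D D"
    unfolding d_def using tilt_s.poly_inner_self_nonneg[of D] by simp
  ultimately have "N s = ?ip s (P u) (P u) + 2 * ?ip s (P u) D + d\<^sup>2"
    unfolding N_def by (simp add: tilt_s.poly_inner_add_left tilt_s.poly_inner_add_right)
  moreover have "c\<^sup>2 = (s - u)\<^sup>2 * (B\<^sup>2 * exp (2 * B * \<bar>s - u\<bar>) * N u)"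
    using tilt_u.poly_inner_self_nonneg unfolding c_def N_def
    by (simp add: power_mult_distrib ac_simps flip: exp_double)
  moreover have "0 \<le> (c - d)\<^sup>2"
    by simp
  ultimately show ?thesis
    using cross by (simp add: power2_diff abs_le_iff)
qed

end

lemma has_real_derivative_monic_orth_poly_exp_tilt_norm_sq:
  assumes "points (n + 1)"
  defines "P \<equiv> \<lambda>s. monic_orth_poly (exp_tilt M (poly G) s) n"
  shows "((\<lambda>s. poly_inner (exp_tilt M (poly G) s) (P s) (P s)) has_real_derivative
    poly_inner (exp_tilt M (poly G) u) (G * P u) (P u)) (at u)"
proof -
  have "continuous_on UNIV (poly G)"
    by (intro continuous_intros)
  then obtain B where B: "\<And>x. x \<in> msupp M \<Longrightarrow> \<bar>poly G x\<bar> \<le> B"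
    using bounded_on_msupp by blast
  then have B': "0 \<le> max B 0" "\<And>x. x \<in> msupp M \<Longrightarrow> \<bar>poly G x\<bar> \<le> max B 0"
    by (auto intro: le_max_iff_disj[THEN iffD2])
  define N where "N s = poly_inner (exp_tilt M (poly G) s) (P s) (P s)" for s
  define K where "K s = (max B 0)\<^sup>2 * exp (2 * max B 0 * \<bar>s - u\<bar>) * N u" for s
  have "(N has_real_derivative poly_inner (exp_tilt M (poly G) u) (G * P u) (P u)) (at u)"
  proof (rule has_real_derivative_if_quadratic_contact[OF has_real_derivative_poly_inner_exp_tilt])
    show "\<bar>N s - poly_inner (exp_tilt M (poly G) s) (P u) (P u)\<bar> \<le> (s - u)\<^sup>2 * K s" for s
      using monic_orth_poly_exp_tilt_norm_sq_le[OF assms(1), of s u]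
        monic_orth_poly_exp_tilt_norm_sq_ge[OF B' assms(1), of s u]
      unfolding N_def K_def P_def by (simp add: abs_le_iff)
    show "isCont K u"
      unfolding K_def by (intro continuous_intros)
  qed (simp add: N_def)
  then show ?thesis
    unfolding N_def .
qed

lemma has_real_derivative_ln_monic_orth_poly_exp_tilt_norm_sq:
  assumes "points (m + 1)"
  defines "P \<equiv> \<lambda>s. monic_orth_poly (exp_tilt M (poly G) s) m"
  shows "((\<lambda>s. ln (poly_inner (exp_tilt M (poly G) s) (P s) (P s))) has_real_derivative
    poly_inner (exp_tilt M (poly G) t) (G * P t) (P t) / poly_inner (exp_tilt M (poly G) t) (P t) (P t))
    (at t)"
proof -
  interpret tilt: compact_support_measure "exp_tilt M (poly G) t"
    by (rule compact_support_measure_exp_tilt_poly)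
  have "0 < poly_inner (exp_tilt M (poly G) t) (P t) (P t)"
    unfolding P_def using assms(1)
    by (intro tilt.poly_inner_monic_orth_poly_self_pos) (simp add: msupp_exp_tilt_poly)
  moreover have "((\<lambda>s. poly_inner (exp_tilt M (poly G) s) (P s) (P s)) has_real_derivative
      poly_inner (exp_tilt M (poly G) t) (G * P t) (P t)) (at t)"
    unfolding P_def by (rule has_real_derivative_monic_orth_poly_exp_tilt_norm_sq[OF assms(1)])
  ultimately show ?thesis
    using DERIV_chain2[OF DERIV_ln_divide] by fastforce
qed

end

end

section \<open>The measures \<open>\<rho>\<^sub>t\<close> of the theorem\<close>

definition half_fprime_poly :: "(nat \<Rightarrow> real) \<Rightarrow> nat \<Rightarrow> real poly" where
  "half_fprime_poly c k = (\<Sum>j=1..k. smult (c j) ([:0, 1:] ^ j))"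

lemma poly_half_fprime_poly: "poly (half_fprime_poly c k) = half_fprime c k"
  by (simp add: fun_eq_iff half_fprime_poly_def half_fprime_def poly_sum)

context compact_support_measure
begin

lemma
  fixes c :: "nat \<Rightarrow> real" and k :: nat
  assumes "points 1"
  defines "G \<equiv> half_fprime_poly c k"
  shows compact_support_measure_rho_t: "compact_support_measure (rho_t M c k s)"
    and msupp_rho_t: "msupp (rho_t M c k s) = msupp M"
    and poly_inner_rho_t: "poly_inner (rho_t M c k s) p q
      = poly_inner (exp_tilt M (poly G) s) p q / poly_inner (exp_tilt M (poly G) s) 1 1"
proof -
  interpret tilt: compact_support_measure "exp_tilt M (poly G) s"
    by (rule compact_support_measure_exp_tilt_poly)
  define Z where "Z = poly_inner (exp_tilt M (poly G) s) 1 1"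
  have "0 < Z"
    unfolding Z_def using assms(1) by (rule poly_inner_exp_tilt_one_pos)
  have "Z = (\<integral>x. exp (poly G x * s) * (poly 1 x * poly 1 x) \<partial>M)"
    unfolding Z_def poly_inner_def by (rule integral_exp_tilt) (intro continuous_intros)+
  then have "(\<integral>y. exp (half_fprime c k y * s) \<partial>M) = Z"
    by (simp add: G_def poly_half_fprime_poly)
  then have rho_t: "rho_t M c k s = density M (\<lambda>x. ennreal (exp (poly G x * s) / Z))"
    unfolding rho_t_def G_def poly_half_fprime_poly by simp
  have density: "continuous_on UNIV (\<lambda>x. exp (poly G x * s) / Z)" "\<And>x. 0 < exp (poly G x * s) / Z"
    using \<open>0 < Z\<close> by (auto intro!: continuous_intros)
  show "compact_support_measure (rho_t M c k s)" "msupp (rho_t M c k s) = msupp M"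
    unfolding rho_t using compact_support_measure_density[OF density] msupp_density[OF density]
    by simp_all
  have "poly_inner (rho_t M c k s) p q = (\<integral>x. exp (poly G x * s) / Z * (poly p x * poly q x) \<partial>M)"
    unfolding rho_t poly_inner_def
    by (rule integral_density_continuous[OF density(1) less_imp_le[OF density(2)]])
      (intro continuous_intros)
  also have "\<dots> = poly_inner (exp_tilt M (poly G) s) p q / Z"
  proof -
    have "poly_inner (exp_tilt M (poly G) s) p q = (\<integral>x. exp (poly G x * s) * (poly p x * poly q x) \<partial>M)"
      unfolding poly_inner_def by (rule integral_exp_tilt) (intro continuous_intros)+
    then show ?thesis
      by simp
  qed
  finally show "poly_inner (rho_t M c k s) p q
      = poly_inner (exp_tilt M (poly G) s) p q / poly_inner (exp_tilt M (poly G) s) 1 1"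
    unfolding Z_def .
qed

lemma monic_orth_poly_rho_t:
  assumes "points 1"
  shows "monic_orth_poly (rho_t M c k s) m = monic_orth_poly (exp_tilt M (poly (half_fprime_poly c k)) s) m"
proof (rule monic_orth_poly_scaled)
  let ?Z = "poly_inner (exp_tilt M (poly (half_fprime_poly c k)) s) 1 1"
  interpret tilt: compact_support_measure "exp_tilt M (poly (half_fprime_poly c k)) s"
    by (rule compact_support_measure_exp_tilt_poly)
  show "poly_inner (rho_t M c k s) p q = 1 / ?Z * poly_inner (exp_tilt M (poly (half_fprime_poly c k)) s) p q"
    for p q
    using poly_inner_rho_t[OF assms] by simp
  show "1 / ?Z \<noteq> 0"
    using poly_inner_exp_tilt_one_pos[OF assms, THEN less_imp_neq, THEN not_sym] by simp
qed

lemma ln_poly_L2norm_rho_t: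
  fixes c :: "nat \<Rightarrow> real" and k :: nat and s :: real
  assumes "points (n + 1)"
  defines "P \<equiv> \<lambda>m. monic_orth_poly (exp_tilt M (poly (half_fprime_poly c k)) s) m"
  shows "ln (poly_L2norm (rho_t M c k s) (monic_orth_poly (rho_t M c k s) n))
    = (ln (poly_inner (exp_tilt M (poly (half_fprime_poly c k)) s) (P n) (P n))
       - ln (poly_inner (exp_tilt M (poly (half_fprime_poly c k)) s) (P 0) (P 0))) / 2"
proof -
  let ?ip = "poly_inner (exp_tilt M (poly (half_fprime_poly c k)) s)"
  interpret tilt: compact_support_measure "exp_tilt M (poly (half_fprime_poly c k)) s"
    by (rule compact_support_measure_exp_tilt_poly)
  have points: "points 1" "tilt.points (n + 1)" "tilt.points 1"
    using assms(1) at_least_points_mono[OF assms(1)] by (simp_all add: msupp_exp_tilt_poly)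
  have "0 < ?ip (P n) (P n)" "0 < ?ip (P 0) (P 0)" "P 0 = 1"
    unfolding P_def using tilt.poly_inner_monic_orth_poly_self_pos[of 0] points
    by (simp_all add: tilt.poly_inner_monic_orth_poly_self_pos tilt.monic_orth_poly_0)
  then show ?thesis
    unfolding poly_L2norm_def monic_orth_poly_rho_t[OF points(1)] poly_inner_rho_t[OF points(1)]
    by (simp add: P_def ln_sqrt ln_div)
qed

lemma sum_mat_pow_inf_jacobi_matrix_rho_t:
  fixes c :: "nat \<Rightarrow> real" and k :: nat and s :: real
  assumes "points (m + 1)"
  defines "G \<equiv> half_fprime_poly c k"
  defines "P \<equiv> monic_orth_poly (exp_tilt M (poly G) s) m"
  shows "(\<Sum>j=1..k. c j * mat_pow_inf (jacobi_matrix (rho_t M c k s)) j (m + 1) (m + 1))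
    = poly_inner (exp_tilt M (poly G) s) (G * P) P / poly_inner (exp_tilt M (poly G) s) P P"
proof -
  let ?ip = "poly_inner (exp_tilt M (poly G) s)"
  have points: "points 1"
    using at_least_points_mono[OF assms(1)] by simp
  interpret rho: compact_support_measure "rho_t M c k s"
    by (rule compact_support_measure_rho_t[OF points])
  interpret tilt: compact_support_measure "exp_tilt M (poly G) s"
    by (rule compact_support_measure_exp_tilt_poly)
  have "mat_pow_inf (jacobi_matrix (rho_t M c k s)) j (m + 1) (m + 1) = ?ip P ([:0, 1:] ^ j * P) / ?ip P P"
    if "j \<in> {1..k}" for j
    using rho.mat_pow_inf_jacobi_matrix_diag[of m j] that assms(1)
      poly_inner_exp_tilt_one_pos[OF points, THEN less_imp_neq, THEN not_sym]
    unfolding monic_orth_poly_rho_t[OF points] poly_inner_rho_t[OF points] msupp_rho_t[OF points]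
    by (simp add: P_def G_def)
  then have "(\<Sum>j=1..k. c j * mat_pow_inf (jacobi_matrix (rho_t M c k s)) j (m + 1) (m + 1))
      = ?ip P (\<Sum>j=1..k. smult (c j) ([:0, 1:] ^ j * P)) / ?ip P P"
    by (simp add: tilt.poly_inner_sum_right tilt.poly_inner_smult_right sum_divide_distrib)
  also have "(\<Sum>j=1..k. smult (c j) ([:0, 1:] ^ j * P)) = G * P"
    unfolding G_def half_fprime_poly_def by (simp add: sum_distrib_right)
  finally show ?thesis
    by (simp add: tilt.poly_inner_commute[of P "G * P"])
qed

end

theorem proposition9p4:
  fixes rho0 :: "real measure" and c :: "nat \<Rightarrow> real" and k n :: nat
  assumes "prob_space rho0"
    and "sets rho0 = sets borel"
    and "compact (msupp rho0)"
    and "at_least_points (n + 1) (msupp rho0)"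
  shows "\<forall>t::real.
    ((\<lambda>s. ln (poly_L2norm (rho_t rho0 c k s) (monic_orth_poly (rho_t rho0 c k s) n)))
      has_real_derivative
       (1/2) * (\<Sum>j=1..k. c j *
          (mat_pow_inf (jacobi_matrix (rho_t rho0 c k t)) j (n + 1) (n + 1)
           - mat_pow_inf (jacobi_matrix (rho_t rho0 c k t)) j 1 1))) (at t)"
proof
  fix t :: real
  interpret compact_support_measure rho0
    using assms(1-3) by (simp add: compact_support_measure_def compact_support_measure_axioms_def prob_space_def)
  define G where "G = half_fprime_poly c k"
  define L where "L m s = ln (poly_inner (exp_tilt rho0 (poly G) s)
    (monic_orth_poly (exp_tilt rho0 (poly G) s) m) (monic_orth_poly (exp_tilt rho0 (poly G) s) m))" for m s
  define D where "D m = (\<Sum>j=1..k. c j * mat_pow_inf (jacobi_matrix (rho_t rho0 c k t)) j (m + 1) (m + 1))"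
    for m
  have points: "points (n + 1)" "points (0 + 1)"
    using assms(4) at_least_points_mono[OF assms(4)] by auto
  have derivative: "((\<lambda>s. (L n s - L 0 s) / 2) has_real_derivative (D n - D 0) / 2) (at t)"
    unfolding L_def D_def sum_mat_pow_inf_jacobi_matrix_rho_t[OF points(1)]
      sum_mat_pow_inf_jacobi_matrix_rho_t[OF points(2)] G_def
    by (intro DERIV_cdivide DERIV_diff has_real_derivative_ln_monic_orth_poly_exp_tilt_norm_sq points)
  have ln_norm: "(\<lambda>s. ln (poly_L2norm (rho_t rho0 c k s) (monic_orth_poly (rho_t rho0 c k s) n)))
      = (\<lambda>s. (L n s - L 0 s) / 2)"
    unfolding L_def G_def ln_poly_L2norm_rho_t[OF points(1)] ..
  have rhs_eq: "(1/2) * (\<Sum>j=1..k. c j * (mat_pow_inf (jacobi_matrix (rho_t rho0 c k t)) j (n + 1) (n + 1)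
      - mat_pow_inf (jacobi_matrix (rho_t rho0 c k t)) j 1 1)) = (D n - D 0) / 2"
    unfolding D_def by (simp add: right_diff_distrib sum_subtractf)
  show "((\<lambda>s. ln (poly_L2norm (rho_t rho0 c k s) (monic_orth_poly (rho_t rho0 c k s) n)))
      has_real_derivative (1/2) * (\<Sum>j=1..k. c j *
        (mat_pow_inf (jacobi_matrix (rho_t rho0 c k t)) j (n + 1) (n + 1)
         - mat_pow_inf (jacobi_matrix (rho_t rho0 c k t)) j 1 1))) (at t)"
    unfolding ln_norm rhs_eq by (rule derivative)
qed

end
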